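(* Let $X$ be a separable topological space, let $T$ be a discrete space with Alexandroff compactification $Y=\alpha T=T\cup\{\infty\}$, and let $f:X\times Y\to\mathbb R$ be a separately continuous function. Then $(\wedge_f,\vee_f)$ is a stable pair of Hahn on $X$.
   Context: In $\alpha T$ the points of $T$ are isolated and neighbourhoods of $\infty$ are complements of finite subsets of $T$. $\wedge_f(x)=\inf_{y\in Y}f(x,y)$, $\vee_f(x)=\sup_{y\in Y}f(x,y)$. A pair $(g,h)$ of functions $X\to\overline{\mathbb R}$ is a stable pair of Hahn if there are continuous $u_n:X\to\overline{\mathbb R}$ with $g(x)=\min_{n\in\mathbb N}u_n(x)$ and $h(x)=\max_{n\in\mathbb N}u_n(x)$ for all $x\in X$ (attained). *)

theory Defs
  imports "HOL-Analysis.Analysis"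
begin

text \<open>Alexandroff (one-point) compactification of the discrete space with carrier T.
  Points of T are represented as Some t, the point at infinity as None.\<close>

definition alex_open :: "'b set \<Rightarrow> 'b option set \<Rightarrow> bool" where
  "alex_open T U \<longleftrightarrow> U \<subseteq> insert None (Some ` T) \<and>
      (None \<in> U \<longrightarrow> finite (Some ` T - U))"

lemma istopology_alex_open: fixes T :: "'b set" shows "istopology (alex_open T)"
proof -
  have 1: "finite (Some ` T - (S \<inter> U))"
    if "finite (Some ` T - S)" "finite (Some ` T - U)" for S U :: "'b option set"
  proof -
    have "Some ` T - (S \<inter> U) = (Some ` T - S) \<union> (Some ` T - U)" by blast
    then show ?thesis using that by simp
  qed
  have 2: "finite (Some ` T - \<Union>K)" if "S \<in> K" "finite (Some ` T - S)"
    for S :: "'b option set" and K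
    by (rule finite_subset[OF _ that(2)]) (use that(1) in blast)
  show ?thesis
    unfolding istopology_def alex_open_def
    using 1 2 by (auto; blast)
qed

definition alexandroff_discrete :: "'b set \<Rightarrow> 'b option topology" where
  "alexandroff_discrete T = topology (alex_open T)"

lemma openin_alexandroff_discrete:
  "openin (alexandroff_discrete T) U \<longleftrightarrow> alex_open T U"
  by (simp add: alexandroff_discrete_def istopology_alex_open)

definition separately_continuous ::
  "'a topology \<Rightarrow> 'b topology \<Rightarrow> ('a \<Rightarrow> 'b \<Rightarrow> real) \<Rightarrow> bool" where
  "separately_continuous X Y f \<longleftrightarrow>
     (\<forall>y\<in>topspace Y. continuous_map X euclideanreal (\<lambda>x. f x y)) \<and>
     (\<forall>x\<in>topspace X. continuous_map Y euclideanreal (\<lambda>y. f x y))"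

definition wedge_f :: "'b topology \<Rightarrow> ('a \<Rightarrow> 'b \<Rightarrow> real) \<Rightarrow> 'a \<Rightarrow> ereal" where
  "wedge_f Y f x = (INF y\<in>topspace Y. ereal (f x y))"

definition vee_f :: "'b topology \<Rightarrow> ('a \<Rightarrow> 'b \<Rightarrow> real) \<Rightarrow> 'a \<Rightarrow> ereal" where
  "vee_f Y f x = (SUP y\<in>topspace Y. ereal (f x y))"

definition stable_Hahn_pair :: "'a topology \<Rightarrow> ('a \<Rightarrow> ereal) \<Rightarrow> ('a \<Rightarrow> ereal) \<Rightarrow> bool" where
  "stable_Hahn_pair X g h \<longleftrightarrow>
     (\<exists>u :: nat \<Rightarrow> 'a \<Rightarrow> ereal.
        (\<forall>n. continuous_map X euclidean (u n)) \<and>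
        (\<forall>x\<in>topspace X.
           (\<forall>n. g x \<le> u n x \<and> u n x \<le> h x) \<and>
           (\<exists>n. u n x = g x) \<and> (\<exists>n. u n x = h x)))"

end

theory Submission
  imports Defs
begin

text \<open>The one-point compactification \<open>Y\<close> of a discrete space is compact, so for each \<open>x\<close> the
  envelopes \<open>\<wedge>\<^sub>f(x)\<close> and \<open>\<vee>\<^sub>f(x)\<close> are attained. A continuous real function on \<open>Y\<close> differs
  from its value at \<open>\<infinity>\<close> at only countably many points. Applying this to \<open>f(c,\<cdot>)\<close> for \<open>c\<close>
  in a countable dense set \<open>C \<subseteq> X\<close> gives a countable \<open>T\<^sub>0 \<subseteq> T\<close> such that for \<open>t \<notin> T\<^sub>0\<close> the
  continuous functions \<open>f(\<cdot>,t)\<close> and \<open>f(\<cdot>,\<infinity>)\<close> agree on \<open>C\<close>, hence on \<open>X\<close>. Thus every value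
  of \<open>f(x,\<cdot>)\<close> is already taken on the countable set \<open>T\<^sub>0 \<union> {\<infinity>}\<close>, and the functions
  \<open>f(\<cdot>,s)\<close>, \<open>s \<in> T\<^sub>0 \<union> {\<infinity>}\<close>, form the required sequence.\<close>

lemma topspace_alexandroff_discrete:
  "topspace (alexandroff_discrete T) = insert None (Some ` T)"
proof -
  have "openin (alexandroff_discrete T) (insert None (Some ` T))"
    by (simp add: openin_alexandroff_discrete alex_open_def)
  moreover have "U \<subseteq> insert None (Some ` T)" if "openin (alexandroff_discrete T) U" for U
    using that by (simp add: openin_alexandroff_discrete alex_open_def)
  ultimately show ?thesis
    unfolding topspace_def by blast
qed

lemma compact_space_alexandroff_discrete: "compact_space (alexandroff_discrete T)"
  unfolding compact_space_alt
proof (intro allI impI, elim conjE)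
  fix \<U>
  assume open_\<U>: "\<forall>U\<in>\<U>. openin (alexandroff_discrete T) U"
    and cover: "topspace (alexandroff_discrete T) \<subseteq> \<Union>\<U>"
  then obtain U\<^sub>0 where U\<^sub>0: "U\<^sub>0 \<in> \<U>" "None \<in> U\<^sub>0"
    by (auto simp: topspace_alexandroff_discrete)
  with open_\<U> have finite_rest: "finite (Some ` T - U\<^sub>0)"
    by (auto simp: openin_alexandroff_discrete alex_open_def)
  have "\<forall>y\<in>Some ` T - U\<^sub>0. \<exists>U\<in>\<U>. y \<in> U"
    using cover by (auto simp: topspace_alexandroff_discrete)
  then obtain V where V: "\<And>y. y \<in> Some ` T - U\<^sub>0 \<Longrightarrow> V y \<in> \<U> \<and> y \<in> V y"
    by metis
  show "\<exists>\<F>. finite \<F> \<and> \<F> \<subseteq> \<U> \<and> topspace (alexandroff_discrete T) \<subseteq> \<Union>\<F>"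
    using finite_rest U\<^sub>0 V
    by (intro exI[of _ "insert U\<^sub>0 (V ` (Some ` T - U\<^sub>0))"])
      (auto simp: topspace_alexandroff_discrete)
qed

lemma countable_nonconstant_at_infinity:
  fixes g :: "'b option \<Rightarrow> 'c::metric_space"
  assumes g: "continuous_map (alexandroff_discrete T) euclidean g"
  shows "countable {t\<in>T. g (Some t) \<noteq> g None}"
proof -
  let ?Y = "alexandroff_discrete T"
  have finite_far: "finite {t\<in>T. e \<le> dist (g (Some t)) (g None)}" if "e > 0" for e
  proof -
    have "openin ?Y {y \<in> topspace ?Y. g y \<in> ball (g None) e}"
      using openin_continuous_map_preimage[OF g, of "ball (g None) e"] by simp
    with \<open>e > 0\<close> have "finite (Some ` T - {y \<in> topspace ?Y. g y \<in> ball (g None) e})"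
      by (simp add: openin_alexandroff_discrete alex_open_def topspace_alexandroff_discrete)
    then have "finite (Some ` {t\<in>T. e \<le> dist (g (Some t)) (g None)})"
      by (rule finite_subset[rotated]) (auto simp: dist_commute)
    then show ?thesis
      by (simp add: finite_image_iff)
  qed
  have "{t\<in>T. g (Some t) \<noteq> g None} = (\<Union>k. {t\<in>T. 1 / Suc k \<le> dist (g (Some t)) (g None)})"
  proof (intro equalityI subsetI)
    fix t assume "t \<in> {t\<in>T. g (Some t) \<noteq> g None}"
    then have "t \<in> T" and pos: "dist (g (Some t)) (g None) > 0"
      by auto
    obtain k where "1 / Suc k < dist (g (Some t)) (g None)"
      using reals_Archimedean[OF pos] by (auto simp: inverse_eq_divide)
    with \<open>t \<in> T\<close> show "t \<in> (\<Union>k. {t\<in>T. 1 / Suc k \<le> dist (g (Some t)) (g None)})"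
      by (intro UN_I[of k]) auto
  qed (auto simp: divide_le_eq)
  also have "countable \<dots>"
    using finite_far by (intro countable_UN) (auto intro: countable_finite)
  finally show ?thesis .
qed

lemma separately_continuous_alexandroff_countable_values:
  assumes "separable_space X"
    and f: "separately_continuous X (alexandroff_discrete T) f"
  obtains S where "countable S" "None \<in> S" "S \<subseteq> topspace (alexandroff_discrete T)"
    and "\<And>x y. x \<in> topspace X \<Longrightarrow> y \<in> topspace (alexandroff_discrete T) \<Longrightarrow> \<exists>s\<in>S. f x s = f x y"
proof -
  let ?Y = "alexandroff_discrete T"
  have cont_X: "\<And>y. y \<in> topspace ?Y \<Longrightarrow> continuous_map X euclideanreal (\<lambda>x. f x y)"
    and cont_Y: "\<And>x. x \<in> topspace X \<Longrightarrow> continuous_map ?Y euclideanreal (f x)"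
    using f by (auto simp: separately_continuous_def)
  obtain C where C: "countable C" "C \<subseteq> topspace X" "X closure_of C = topspace X"
    using \<open>separable_space X\<close> unfolding separable_space_def by blast
  define T\<^sub>0 where "T\<^sub>0 = (\<Union>c\<in>C. {t\<in>T. f c (Some t) \<noteq> f c None})"
  have "countable T\<^sub>0"
    unfolding T\<^sub>0_def
  proof (rule countable_UN[OF C(1)])
    fix c assume "c \<in> C"
    with C(2) show "countable {t\<in>T. f c (Some t) \<noteq> f c None}"
      by (intro countable_nonconstant_at_infinity cont_Y) auto
  qed
  have agree: "f x (Some t) = f x None" if x: "x \<in> topspace X" and t: "t \<in> T - T\<^sub>0" for x t
  proof (rule forall_in_closure_of_eq[where f = "\<lambda>x. f x (Some t)" and g = "\<lambda>x. f x None"])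
    show "x \<in> X closure_of C"
      using C(3) x by simp
    show "continuous_map X euclideanreal (\<lambda>x. f x (Some t))"
      and "continuous_map X euclideanreal (\<lambda>x. f x None)"
      using t by (auto intro!: cont_X simp: topspace_alexandroff_discrete)
    show "f c (Some t) = f c None" if "c \<in> C" for c
      using that t by (auto simp: T\<^sub>0_def)
  qed simp
  show thesis
  proof (rule that[of "insert None (Some ` T\<^sub>0)"])
    show "countable (insert None (Some ` T\<^sub>0))"
      using \<open>countable T\<^sub>0\<close> by simp
    show "insert None (Some ` T\<^sub>0) \<subseteq> topspace ?Y"
      by (auto simp: T\<^sub>0_def topspace_alexandroff_discrete)
    show "\<exists>s\<in>insert None (Some ` T\<^sub>0). f x s = f x y" if "x \<in> topspace X" "y \<in> topspace ?Y" for x y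
    proof (cases y)
      case (Some t)
      with that have "t \<in> T"
        by (auto simp: topspace_alexandroff_discrete)
      with Some agree[OF \<open>x \<in> topspace X\<close>, of t] show ?thesis
        by (cases "t \<in> T\<^sub>0") auto
    qed auto
  qed simp
qed

lemma wedge_f_attained:
  assumes "compact_space Y" "topspace Y \<noteq> {}" "continuous_map Y euclideanreal (f x)"
  shows "\<exists>y\<in>topspace Y. wedge_f Y f x = ereal (f x y)"
proof -
  have "compactin euclideanreal (f x ` topspace Y)"
    using assms(1,3) unfolding compact_space_def by (rule image_compactin)
  then obtain y where "y \<in> topspace Y" "\<And>z. z \<in> topspace Y \<Longrightarrow> f x y \<le> f x z"
    using compact_attains_inf[of "f x ` topspace Y"] assms(2) by auto
  then show ?thesis
    unfolding wedge_f_def by (intro bexI[of _ y] antisym) (auto intro!: INF_lower INF_greatest)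
qed

lemma vee_f_attained:
  assumes "compact_space Y" "topspace Y \<noteq> {}" "continuous_map Y euclideanreal (f x)"
  shows "\<exists>y\<in>topspace Y. vee_f Y f x = ereal (f x y)"
proof -
  have "compactin euclideanreal (f x ` topspace Y)"
    using assms(1,3) unfolding compact_space_def by (rule image_compactin)
  then obtain y where "y \<in> topspace Y" "\<And>z. z \<in> topspace Y \<Longrightarrow> f x z \<le> f x y"
    using compact_attains_sup[of "f x ` topspace Y"] assms(2) by auto
  then show ?thesis
    unfolding vee_f_def by (intro bexI[of _ y] antisym) (auto intro!: SUP_upper SUP_least)
qed

lemma stable_Hahn_pairI_countable:
  assumes "countable U" "U \<noteq> {}"
    and "\<And>u. u \<in> U \<Longrightarrow> continuous_map X euclidean u"
    and "\<And>x u. x \<in> topspace X \<Longrightarrow> u \<in> U \<Longrightarrow> g x \<le> u x \<and> u x \<le> h x"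
    and "\<And>x. x \<in> topspace X \<Longrightarrow> \<exists>u\<in>U. u x = g x"
    and "\<And>x. x \<in> topspace X \<Longrightarrow> \<exists>u\<in>U. u x = h x"
  shows "stable_Hahn_pair X g h"
  unfolding stable_Hahn_pair_def
proof (intro exI[of _ "from_nat_into U"] conjI allI ballI)
  have in_U: "from_nat_into U n \<in> U" for n
    using \<open>U \<noteq> {}\<close> by (rule from_nat_into)
  have onto: "\<exists>n. from_nat_into U n = u" if "u \<in> U" for u
    using from_nat_into_surj[OF \<open>countable U\<close> that] by blast
  fix n x
  show "continuous_map X euclidean (from_nat_into U n)"
    using assms(3) in_U by blast
  assume x: "x \<in> topspace X"
  show "g x \<le> from_nat_into U n x" "from_nat_into U n x \<le> h x"
    using assms(4)[OF x in_U] by auto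
  show "\<exists>n. from_nat_into U n x = g x" "\<exists>n. from_nat_into U n x = h x"
    using assms(5,6)[OF x] onto by metis+
qed

lemma stable_Hahn_pair_envelopes_countable_values:
  assumes Y: "compact_space Y" "topspace Y \<noteq> {}"
    and cont_Y: "\<And>x. x \<in> topspace X \<Longrightarrow> continuous_map Y euclideanreal (f x)"
    and S: "countable S" "S \<noteq> {}" "S \<subseteq> topspace Y"
    and cont_X: "\<And>s. s \<in> S \<Longrightarrow> continuous_map X euclideanreal (\<lambda>x. f x s)"
    and all_values: "\<And>x y. x \<in> topspace X \<Longrightarrow> y \<in> topspace Y \<Longrightarrow> \<exists>s\<in>S. f x s = f x y"
  shows "stable_Hahn_pair X (wedge_f Y f) (vee_f Y f)"
proof -
  define slice where "slice s = (\<lambda>x. ereal (f x s))" for s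
  have ereal_cont: "continuous_map euclideanreal euclidean ereal"
    using continuous_on_ereal[OF continuous_on_id] by simp
  show ?thesis
  proof (rule stable_Hahn_pairI_countable[where U = "slice ` S"])
    show "continuous_map X euclidean u" if "u \<in> slice ` S" for u
      using that continuous_map_compose[OF cont_X ereal_cont]
      by (auto simp: slice_def o_def)
    show "wedge_f Y f x \<le> u x \<and> u x \<le> vee_f Y f x" if "u \<in> slice ` S" for x u
      using that S(3) unfolding wedge_f_def vee_f_def slice_def
      by (auto intro!: INF_lower SUP_upper)
    show "\<exists>u\<in>slice ` S. u x = wedge_f Y f x" if x: "x \<in> topspace X" for x
    proof -
      obtain y where "y \<in> topspace Y" "wedge_f Y f x = ereal (f x y)"
        using wedge_f_attained[of _ f x, OF Y cont_Y[OF x]] by blast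
      with all_values[OF x] show ?thesis
        by (auto simp: slice_def)
    qed
    show "\<exists>u\<in>slice ` S. u x = vee_f Y f x" if x: "x \<in> topspace X" for x
    proof -
      obtain y where "y \<in> topspace Y" "vee_f Y f x = ereal (f x y)"
        using vee_f_attained[of _ f x, OF Y cont_Y[OF x]] by blast
      with all_values[OF x] show ?thesis
        by (auto simp: slice_def)
    qed
  qed (use S in auto)
qed

theorem proposition3p3:
  fixes X :: "'a topology" and T :: "'b set" and f :: "'a \<Rightarrow> 'b option \<Rightarrow> real"
  assumes "separable_space X"
    and "separately_continuous X (alexandroff_discrete T) f"
  shows "stable_Hahn_pair X (wedge_f (alexandroff_discrete T) f) (vee_f (alexandroff_discrete T) f)"
proof -
  obtain S where S: "countable S" "None \<in> S" "S \<subseteq> topspace (alexandroff_discrete T)"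
    and all_values: "\<And>x y. x \<in> topspace X \<Longrightarrow> y \<in> topspace (alexandroff_discrete T) \<Longrightarrow>
      \<exists>s\<in>S. f x s = f x y"
    using separately_continuous_alexandroff_countable_values[OF assms] by blast
  show ?thesis
  proof (rule stable_Hahn_pair_envelopes_countable_values[OF _ _ _ S(1) _ S(3) _ all_values])
    show "compact_space (alexandroff_discrete T)" "topspace (alexandroff_discrete T) \<noteq> {}"
      by (simp_all add: compact_space_alexandroff_discrete topspace_alexandroff_discrete)
    show "S \<noteq> {}"
      using S(2) by blast
  qed (use assms(2) S(3) in \<open>auto simp: separately_continuous_def\<close>)
qed

end
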